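(* Let $p$ be an odd prime and $n\ge2$ an integer with base-$p$ expansion $n=n_0+n_1p+\cdots+n_kp^k$, $n_j\in\{0,\ldots,p-1\}$, $n_k>0$. Then: (1) if it is not the case that $n_0=\cdots=n_{k-1}=p-1$, then $c^B_{p,i}(n)=c^B_{p,-i}(n)$ for all $i\in\mathbb{Z}_p$; (2) for each $i\in\mathbb{Z}_p$, $c^B_{p,i}(n)$ is divisible by $2^{\,n+2-\prod_{j=0}^k(n_j+1)}$ if $i=0$ or $n_0=\cdots=n_{k-1}=p-1$, and by $2^{\,n+1-\prod_{j=0}^k(n_j+1)}$ otherwise.
   Context: A signed permutation of $[n]$ is a bijection $w$ of $\{\pm1,\ldots,\pm n\}$ with $w(-i)=-w(i)$; these form $\mathfrak{S}^B_n$. With $w(0):=0$, $D(w)=\{i\in\{0,\ldots,n-1\}: w(i)>w(i+1)\}$. A pseudo-composition of $n$ ($\alpha\models_0 n$) is a sequence $(\alpha_1,\ldots,\alpha_\ell)$ of integers with $\alpha_1\ge0$, $\alpha_2,\ldots,\alpha_\ell>0$ and sum $n$, with $D(\alpha)=\{\alpha_1,\alpha_1+\alpha_2,\ldots,\alpha_1+\cdots+\alpha_{\ell-1}\}$. The type $B$ ribbon number is $r^B_\alpha=|\{w\in\mathfrak{S}^B_n: D(w)=D(\alpha)\}|$ and $c^B_{p,i}(n)=|\{\alpha\models_0 n: r^B_\alpha\equiv i\pmod p\}|$. *)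

theory Defs
  imports "HOL-Combinatorics.Permutations" "HOL-Number_Theory.Number_Theory"
begin

text \<open>Signed permutations of [n]: bijections w of {-n..n}-{0} (extended by the
identity elsewhere, in particular w 0 = 0) with w(-i) = -w(i).\<close>
definition signed_perms :: "nat \<Rightarrow> (int \<Rightarrow> int) set" where
  "signed_perms n = {w. w permutes ({- int n .. int n} - {0}) \<and> (\<forall>i. w (- i) = - w i)}"

definition descB :: "nat \<Rightarrow> (int \<Rightarrow> int) \<Rightarrow> nat set" where
  "descB n w = {i. i < n \<and> w (int i) > w (int i + 1)}"

definition pseudo_comps :: "nat \<Rightarrow> nat list set" where
  "pseudo_comps n = {\<alpha>. \<alpha> \<noteq> [] \<and> (\<forall>j. 0 < j \<and> j < length \<alpha> \<longrightarrow> 0 < \<alpha> ! j) \<and> sum_list \<alpha> = n}"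

definition desc_comp :: "nat list \<Rightarrow> nat set" where
  "desc_comp \<alpha> = {sum_list (take j \<alpha>) | j. 1 \<le> j \<and> j < length \<alpha>}"

definition ribbonB :: "nat \<Rightarrow> nat list \<Rightarrow> nat" where
  "ribbonB n \<alpha> = card {w \<in> signed_perms n. descB n w = desc_comp \<alpha>}"

definition cB :: "nat \<Rightarrow> int \<Rightarrow> nat \<Rightarrow> nat" where
  "cB p i n = card {\<alpha> \<in> pseudo_comps n. [int (ribbonB n \<alpha>) = i] (mod int p)}"

definition digit :: "nat \<Rightarrow> nat \<Rightarrow> nat \<Rightarrow> nat" where
  "digit p n j = (n div p ^ j) mod p"

end

theory Submission
  imports Defs
begin

text \<open>
  Write \<open>R(S)\<close> for the number of signed permutations of \<open>[n]\<close> with descent set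
  \<open>S \<subseteq> {0..<n}\<close>; \<open>desc_comp\<close> identifies the pseudo-compositions of \<open>n\<close> with these sets.
  Negating all values gives \<open>R({0..<n} - S) = R(S)\<close>. Fixing the descents away from \<open>s\<close> and
  sorting permutations by the absolute values in positions \<open>1..s\<close> shows that \<open>n choose s\<close>
  divides \<open>R(S) + R(S \<union> {s})\<close> for \<open>s \<notin> S\<close>. So for \<open>s\<close> in
  \<open>F = {s. 0 < s < n \<and> p dvd (n choose s)}\<close>, toggling \<open>s\<close> negates \<open>R(S)\<close> modulo \<open>p\<close>.
  By Lucas' theorem \<open>card F = n + 1 - (\<Prod>j\<le>k. n\<^sub>j + 1)\<close>, and \<open>F = {}\<close> exactly when all digits
  below the leading one are \<open>p - 1\<close>.

  Complementation and the toggles in \<open>F\<close> generate a group of order \<open>2 ^ (card F + 1)\<close> acting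
  freely on the subsets of \<open>{0..<n}\<close>. One toggle exchanges the classes \<open>R \<equiv> i\<close> and
  \<open>R \<equiv> -i\<close>; the whole group preserves the class \<open>R \<equiv> 0\<close> and the union of the classes of
  \<open>i\<close> and \<open>-i\<close>, which are disjoint for \<open>i \<noteq> 0\<close> in \<open>\<int>/p\<close> because \<open>p\<close> is odd.
\<close>

section \<open>Lucas' theorem and base-\<open>p\<close> digits\<close>

lemma choose_cong_diff_prime:
  fixes p n s :: nat
  assumes p: "prime p" and "p \<le> n"
  shows "[n choose s = ((n - p) choose s) + (if p \<le> s then (n - p) choose (s - p) else 0)] (mod p)"
proof -
  have p0: "0 < p" using prime_gt_0_nat[OF p] .
  let ?g = "\<lambda>k. if k = 0 then (n - p) choose s else if k = p then (n - p) choose (s - p) else 0"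
  have "n choose s = (\<Sum>k\<le>s. (p choose k) * ((n - p) choose (s - k)))"
    using vandermonde[of p "n - p" s] \<open>p \<le> n\<close> by simp
  also have "[\<dots> = (\<Sum>k\<le>s. ?g k)] (mod p)"
  proof (rule cong_sum)
    fix k
    show "[(p choose k) * ((n - p) choose (s - k)) = ?g k] (mod p)"
    proof (cases "k = 0 \<or> k = p \<or> p < k")
      case True
      then show ?thesis using p0 by (auto simp: binomial_eq_0)
    next
      case False
      then have "p dvd (p choose k)" using dvd_choose_prime[of k p] p by auto
      then show ?thesis using False by (auto simp: cong_0_iff)
    qed
  qed
  also have "(\<Sum>k\<le>s. ?g k) = (\<Sum>k\<le>s. if k = 0 then (n - p) choose s else 0)
      + (\<Sum>k\<le>s. if k = p then (n - p) choose (s - p) else 0)"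
    using p0 by (subst sum.distrib[symmetric]) (rule sum.cong, auto)
  also have "\<dots> = ((n - p) choose s) + (if p \<le> s then (n - p) choose (s - p) else 0)"
    by simp
  finally show ?thesis .
qed

lemma lucas_cong:
  fixes p a b c d :: nat
  assumes p: "prime p" and "b < p" and "d < p"
  shows "[(p * a + b) choose (p * c + d) = (a choose c) * (b choose d)] (mod p)"
proof (induction a arbitrary: c)
  case 0
  show ?case
  proof (cases c)
    case (Suc c')
    then have "b < p * c + d" using \<open>b < p\<close> by (simp add: less_le_trans)
    then show ?thesis using Suc by (simp add: binomial_eq_0)
  qed simp
next
  case (Suc a)
  have "p * Suc a + b - p = p * a + b" by simp
  then have "[(p * Suc a + b) choose (p * c + d)
      = ((p * a + b) choose (p * c + d)) + (if p \<le> p * c + d then (p * a + b) choose (p * c + d - p) else 0)] (mod p)"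
    using choose_cong_diff_prime[OF p, of "p * Suc a + b" "p * c + d"] by (simp only:) simp
  also have "[((p * a + b) choose (p * c + d)) + (if p \<le> p * c + d then (p * a + b) choose (p * c + d - p) else 0)
      = (a choose c) * (b choose d) + (if 0 < c then (a choose (c - 1)) * (b choose d) else 0)] (mod p)"
  proof (cases c)
    case 0
    then have "\<not> p \<le> p * c + d" using \<open>d < p\<close> by simp
    then show ?thesis using Suc.IH[of 0] 0 by simp
  next
    case (Suc c')
    then have "p * c + d - p = p * c' + d" by simp
    then show ?thesis using cong_add[OF Suc.IH[of c] Suc.IH[of c']] Suc by simp
  qed
  also have "(a choose c) * (b choose d) + (if 0 < c then (a choose (c - 1)) * (b choose d) else 0)
      = (Suc a choose c) * (b choose d)"
    by (cases c) (auto simp: algebra_simps)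
  finally show ?case .
qed

lemma prime_not_dvd_choose_less:
  fixes p b d :: nat
  assumes p: "prime p" and "b < p" and "d \<le> b"
  shows "\<not> p dvd (b choose d)"
proof
  assume "p dvd (b choose d)"
  then have "p dvd fact d * fact (b - d) * (b choose d)" by simp
  then have "p dvd fact b" using binomial_fact_lemma[OF \<open>d \<le> b\<close>] by simp
  then show False using prime_dvd_fact_iff[OF p] \<open>b < p\<close> by simp
qed

lemma prime_dvd_choose_iff:
  fixes p n s :: nat
  assumes p: "prime p"
  shows "p dvd (n choose s) \<longleftrightarrow> p dvd ((n div p) choose (s div p)) \<or> n mod p < s mod p"
proof -
  have p0: "0 < p" using prime_gt_0_nat[OF p] .
  have "[n choose s = ((n div p) choose (s div p)) * ((n mod p) choose (s mod p))] (mod p)"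
    using lucas_cong[OF p, of "n mod p" "s mod p" "n div p" "s div p"] p0 by simp
  then have "p dvd (n choose s) \<longleftrightarrow> p dvd ((n div p) choose (s div p)) * ((n mod p) choose (s mod p))"
    by (simp add: cong_dvd_iff)
  also have "\<dots> \<longleftrightarrow> p dvd ((n div p) choose (s div p)) \<or> p dvd ((n mod p) choose (s mod p))"
    using p by (simp add: prime_dvd_mult_iff)
  also have "p dvd ((n mod p) choose (s mod p)) \<longleftrightarrow> n mod p < s mod p"
    using prime_not_dvd_choose_less[OF p, of "n mod p" "s mod p"] p0
    by (cases "n mod p < s mod p") (auto simp: binomial_eq_0)
  finally show ?thesis .
qed

lemma finite_not_dvd_choose: "finite {s. \<not> (p::nat) dvd (n choose s)}"
proof (rule finite_subset[of _ "{..n}"])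
  show "{s. \<not> p dvd (n choose s)} \<subseteq> {..n}"
  proof
    fix s assume "s \<in> {s. \<not> p dvd (n choose s)}"
    then show "s \<in> {..n}" by (cases "s \<le> n") (auto simp: binomial_eq_0)
  qed
qed simp

lemma card_not_dvd_choose_div:
  fixes p n :: nat
  assumes p: "prime p"
  shows "card {s. \<not> p dvd (n choose s)} = (n mod p + 1) * card {t. \<not> p dvd ((n div p) choose t)}"
proof -
  have p0: "0 < p" using prime_gt_0_nat[OF p] .
  let ?B = "{t. \<not> p dvd ((n div p) choose t)} \<times> {..n mod p}"
  have small: "d < p" if "d \<le> n mod p" for d
    using that p0 by (meson le_less_trans mod_less_divisor)
  have "bij_betw (\<lambda>(t, d). p * t + d) ?B {s. \<not> p dvd (n choose s)}"
    by (rule bij_betw_byWitness[where f' = "\<lambda>s. (s div p, s mod p)"])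
      (use small p0 prime_dvd_choose_iff[OF p, of n] in auto)
  then show ?thesis
    by (simp add: bij_betw_same_card[symmetric] card_cartesian_product)
qed

lemma digit_0: "digit p n 0 = n mod p"
  by (simp add: digit_def)

lemma digit_Suc: "digit p n (Suc j) = digit p (n div p) j"
  by (simp add: digit_def div_mult2_eq)

lemma prod_digits_Suc:
  "(\<Prod>j\<le>Suc k. digit p n j + 1) = (n mod p + 1) * (\<Prod>j\<le>k. digit p (n div p) j + 1)"
  unfolding prod.atMost_Suc_shift digit_0 digit_Suc ..

lemma card_not_dvd_choose_eq_prod_digits:
  fixes p n k :: nat
  assumes p: "prime p" and "n < p ^ (k + 1)"
  shows "card {s. \<not> p dvd (n choose s)} = (\<Prod>j\<le>k. digit p n j + 1)"
  using assms(2)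
proof (induction k arbitrary: n)
  case 0
  have "\<not> p dvd (0 choose t) \<longleftrightarrow> t = 0" for t
    using p by (cases t) (auto simp: prime_gt_1_nat)
  with 0 have "{t. \<not> p dvd ((n div p) choose t)} = {0}" by auto
  then show ?case using card_not_dvd_choose_div[OF p, of n] by (simp add: digit_0)
next
  case (Suc k)
  then have "n div p < p ^ (k + 1)"
    using prime_gt_0_nat[OF p] by (simp add: div_less_iff_less_mult mult.commute)
  then show ?case
    unfolding prod_digits_Suc using Suc.IH card_not_dvd_choose_div[OF p, of n] by simp
qed

lemma prod_digits_le:
  assumes "0 < p"
  shows "(\<Prod>j\<le>k. digit p n j + 1) \<le> n + 1"
proof (induction k arbitrary: n)
  case 0
  then show ?case by (simp add: digit_0)
next
  case (Suc k)
  have "(\<Prod>j\<le>Suc k. digit p n j + 1) \<le> (n mod p + 1) * (n div p + 1)"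
    unfolding prod_digits_Suc using Suc.IH by (rule mult_le_mono2)
  also have "\<dots> = (n mod p + 1) * (n div p) + n mod p + 1"
    by (simp add: algebra_simps)
  also have "\<dots> \<le> p * (n div p) + n mod p + 1"
  proof -
    have "n mod p + 1 \<le> p" using assms by (simp add: Suc_le_eq)
    then have "(n mod p + 1) * (n div p) \<le> p * (n div p)" by (rule mult_le_mono1)
    then show ?thesis by linarith
  qed
  also have "\<dots> = n + 1" by simp
  finally show ?case .
qed

lemma Suc_mult_eq_iff:
  fixes d m p q :: nat
  assumes "q \<le> m + 1" and "d < p" and "0 < m"
  shows "(d + 1) * q = d + p * m + 1 \<longleftrightarrow> q = m + 1 \<and> d = p - 1"
proof
  assume eq: "(d + 1) * q = d + p * m + 1"
  have a: "(d + 1) * q \<le> (d + 1) * (m + 1)"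
    using assms(1) by (rule mult_le_mono2)
  have "(d + 1) * m \<le> p * m" using assms(2) by (intro mult_le_mono1) simp
  then have b: "(d + 1) * (m + 1) \<le> d + p * m + 1"
    by (simp add: algebra_simps)
  have "(d + 1) * q = (d + 1) * (m + 1)"
    using a b eq by linarith
  then have "q = m + 1"
    by (metis mult_left_cancel add_eq_0_iff_both_eq_0 one_neq_zero)
  moreover have "(d + 1) * (m + 1) = d + p * m + 1"
    using a b eq by linarith
  then have "(d + 1) * m = p * m"
    by (simp add: algebra_simps)
  then have "d + 1 = p" using assms(3) by (metis mult_right_cancel not_less0)
  ultimately show "q = m + 1 \<and> d = p - 1" by simp
next
  assume "q = m + 1 \<and> d = p - 1"
  then show "(d + 1) * q = d + p * m + 1"
    using assms(2) by (simp add: algebra_simps)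
qed

lemma prod_digits_eq_Suc_iff:
  assumes "1 < p" and "p ^ k \<le> n" and "n < p ^ (k + 1)"
  shows "(\<Prod>j\<le>k. digit p n j + 1) = n + 1 \<longleftrightarrow> (\<forall>j<k. digit p n j = p - 1)"
  using assms(2,3)
proof (induction k arbitrary: n)
  case 0
  then show ?case by (simp add: digit_0)
next
  case (Suc k)
  define m where "m = n div p"
  define n0 where "n0 = n mod p"
  have n: "n = n0 + p * m" and n0: "n0 < p" using assms(1) by (simp_all add: m_def n0_def)
  have "p ^ k \<le> m" "m < p ^ (k + 1)"
    using Suc.prems assms(1) by (simp_all add: m_def less_eq_div_iff_mult_less_eq div_less_iff_less_mult mult.commute)
  note IH = Suc.IH[OF this]
  have "0 < p ^ k" using assms(1) by simp
  then have "0 < m" using \<open>p ^ k \<le> m\<close> by linarith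
  have prod: "(\<Prod>j\<le>Suc k. digit p n j + 1) = (n0 + 1) * (\<Prod>j\<le>k. digit p m j + 1)"
    unfolding prod_digits_Suc m_def n0_def ..
  have le: "(\<Prod>j\<le>k. digit p m j + 1) \<le> m + 1" using prod_digits_le assms(1) by simp
  have "(n0 + 1) * (\<Prod>j\<le>k. digit p m j + 1) = n + 1 \<longleftrightarrow> (\<Prod>j\<le>k. digit p m j + 1) = m + 1 \<and> n0 = p - 1"
    unfolding n by (rule Suc_mult_eq_iff[OF le n0 \<open>0 < m\<close>])
  also have "\<dots> \<longleftrightarrow> (\<forall>j<Suc k. digit p n j = p - 1)"
    unfolding IH All_less_Suc2 by (auto simp: digit_0 digit_Suc m_def n0_def)
  finally show ?case unfolding prod .
qed

section \<open>Families of sets closed under toggling\<close>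

definition toggle :: "'a \<Rightarrow> 'a set \<Rightarrow> 'a set" where
  "toggle x S = (if x \<in> S then S - {x} else insert x S)"

lemma toggle_toggle [simp]: "toggle x (toggle x S) = S"
  by (auto simp: toggle_def)

lemma mem_toggle_iff: "y \<in> toggle x S \<longleftrightarrow> (y = x \<longleftrightarrow> y \<notin> S)"
  by (auto simp: toggle_def)

lemma card_eq_double_if_involution_flips:
  assumes "finite P" and "\<And>S. S \<in> P \<Longrightarrow> \<sigma> S \<in> P" and "\<And>S. S \<in> P \<Longrightarrow> \<sigma> (\<sigma> S) = S"
    and "\<And>S. S \<in> P \<Longrightarrow> x \<in> \<sigma> S \<longleftrightarrow> x \<notin> S"
  shows "card P = 2 * card {S \<in> P. x \<notin> S}"
proof -
  have "bij_betw \<sigma> {S \<in> P. x \<notin> S} {S \<in> P. x \<in> S}"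
    by (rule bij_betw_byWitness[where f' = \<sigma>]) (use assms(2-4) in auto)
  then have "card {S \<in> P. x \<in> S} = card {S \<in> P. x \<notin> S}" by (simp add: bij_betw_same_card)
  moreover have "card P = card {S \<in> P. x \<in> S} + card {S \<in> P. x \<notin> S}"
    using assms(1) by (subst card_Un_disjoint[symmetric]) (auto intro: arg_cong[where f = card])
  ultimately show ?thesis by simp
qed

lemma two_power_card_dvd_card_if_toggle_closed:
  assumes "finite F" and "finite P" and "\<And>S x. S \<in> P \<Longrightarrow> x \<in> F \<Longrightarrow> toggle x S \<in> P"
  shows "2 ^ card F dvd card P"
  using assms
proof (induction F arbitrary: P rule: finite_induct)
  case (insert x F)
  have "card P = 2 * card {S \<in> P. x \<notin> S}"
    by (rule card_eq_double_if_involution_flips[where \<sigma> = "toggle x"]) (use insert.prems in \<open>auto simp: mem_toggle_iff\<close>)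
  moreover have "2 ^ card F dvd card {S \<in> P. x \<notin> S}"
    by (rule insert.IH) (use insert in \<open>auto simp: mem_toggle_iff\<close>)
  ultimately show ?case using insert.hyps by simp
qed simp

lemma two_power_Suc_card_dvd_card_if_toggle_compl_closed:
  assumes "finite W" and "F \<subseteq> W" and "z \<in> W - F" and "P \<subseteq> Pow W"
    and "\<And>S x. S \<in> P \<Longrightarrow> x \<in> F \<Longrightarrow> toggle x S \<in> P" and "\<And>S. S \<in> P \<Longrightarrow> W - S \<in> P"
  shows "2 ^ Suc (card F) dvd card P"
proof -
  have fin: "finite P" "finite F"
    using assms(1,2,4) by (auto intro: finite_subset)
  have "card P = 2 * card {S \<in> P. z \<notin> S}"
    by (rule card_eq_double_if_involution_flips[where \<sigma> = "\<lambda>S. W - S"]) (use fin assms in auto)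
  moreover have "2 ^ card F dvd card {S \<in> P. z \<notin> S}"
    by (rule two_power_card_dvd_card_if_toggle_closed) (use fin assms in \<open>auto simp: mem_toggle_iff\<close>)
  ultimately show ?thesis by simp
qed

section \<open>Signed permutations and descent sets\<close>

definition signed_support :: "nat \<Rightarrow> int set" where
  "signed_support n = {- int n .. int n} - {0}"

lemma mem_signed_support: "x \<in> signed_support n \<longleftrightarrow> x \<noteq> 0 \<and> \<bar>x\<bar> \<le> int n"
  by (auto simp: signed_support_def)

lemma signed_permsI:
  "w permutes signed_support n \<Longrightarrow> (\<And>i. w (- i) = - w i) \<Longrightarrow> w \<in> signed_perms n"
  by (simp add: signed_perms_def signed_support_def)

lemma signed_perms_permutes: "w \<in> signed_perms n \<Longrightarrow> w permutes signed_support n"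
  by (simp add: signed_perms_def signed_support_def)

lemma signed_perms_odd: "w \<in> signed_perms n \<Longrightarrow> w (- i) = - w i"
  by (simp add: signed_perms_def)

lemma signed_perms_fixes: "w \<in> signed_perms n \<Longrightarrow> x \<notin> signed_support n \<Longrightarrow> w x = x"
  using signed_perms_permutes permutes_not_in by fastforce

lemma signed_perms_zero: "w \<in> signed_perms n \<Longrightarrow> w 0 = 0"
  using signed_perms_fixes[of w n 0] by (simp add: mem_signed_support)

lemma signed_perms_in_iff: "w \<in> signed_perms n \<Longrightarrow> w x \<in> signed_support n \<longleftrightarrow> x \<in> signed_support n"
  using signed_perms_permutes permutes_in_image by fastforce

lemma signed_perms_eq_iff: "w \<in> signed_perms n \<Longrightarrow> w x = w y \<longleftrightarrow> x = y"
  using signed_perms_permutes permutes_inj by (metis injD)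

lemma finite_signed_perms: "finite (signed_perms n)"
proof (rule finite_subset)
  show "signed_perms n \<subseteq> {w. w permutes signed_support n}"
    using signed_perms_permutes by blast
  show "finite {w. w permutes signed_support n}"
    by (rule finite_permutations) (simp add: signed_support_def)
qed

lemma signed_perms_compose:
  assumes "w \<in> signed_perms n" and "\<sigma> permutes signed_support n" and "\<And>x. \<sigma> (- x) = - \<sigma> x"
  shows "\<sigma> \<circ> w \<in> signed_perms n"
proof (rule signed_permsI)
  show "\<sigma> \<circ> w permutes signed_support n"
    using signed_perms_permutes[OF assms(1)] assms(2) by (rule permutes_compose)
  show "(\<sigma> \<circ> w) (- i) = - (\<sigma> \<circ> w) i" for i
    using assms(3) signed_perms_odd[OF assms(1)] by simp
qed

lemma signed_perms_abs_bounds: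
  "w \<in> signed_perms n \<Longrightarrow> 1 \<le> i \<Longrightarrow> i \<le> int n \<Longrightarrow> 1 \<le> \<bar>w i\<bar> \<and> \<bar>w i\<bar> \<le> int n"
  using signed_perms_in_iff[of w n i] by (auto simp: mem_signed_support)

lemma signed_perms_abs_inj:
  assumes w: "w \<in> signed_perms n" and "1 \<le> i" "1 \<le> j" and "\<bar>w i\<bar> = \<bar>w j\<bar>"
  shows "i = j"
proof -
  have "w i = w j \<or> w i = w (- j)"
    using assms(4) signed_perms_odd[OF w, of j] by (auto simp: abs_if split: if_splits)
  then have "i = j \<or> i = - j" using signed_perms_eq_iff[OF w] by blast
  then show "i = j" using assms(2,3) by auto
qed

definition ribbon_desc :: "nat \<Rightarrow> nat set \<Rightarrow> nat" where
  "ribbon_desc n S = card {w \<in> signed_perms n. descB n w = S}"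

lemma ribbonB_eq_ribbon_desc: "ribbonB n \<alpha> = ribbon_desc n (desc_comp \<alpha>)"
  by (simp add: ribbonB_def ribbon_desc_def)

definition signed_negate :: "nat \<Rightarrow> int \<Rightarrow> int" where
  "signed_negate n x = (if x \<in> signed_support n then - x else x)"

lemma signed_negate_signed_negate [simp]: "signed_negate n (signed_negate n x) = x"
  by (simp add: signed_negate_def mem_signed_support)

lemma signed_negate_permutes: "signed_negate n permutes signed_support n"
  unfolding permutes_def
proof (intro conjI allI impI)
  fix y
  show "\<exists>!x. signed_negate n x = y"
  proof (rule ex1I[of _ "signed_negate n y"])
    fix x
    assume "signed_negate n x = y"
    then show "x = signed_negate n y" by (metis signed_negate_signed_negate)
  qed simp
qed (simp add: signed_negate_def)

lemma signed_negate_odd: "signed_negate n (- x) = - signed_negate n x"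
  by (simp add: signed_negate_def mem_signed_support)

lemma descB_signed_negate:
  assumes w: "w \<in> signed_perms n"
  shows "descB n (signed_negate n \<circ> w) = {0..<n} - descB n w"
proof -
  have neg: "signed_negate n (w (int i)) = - w (int i)" if "i \<le> n" for i
    using that signed_perms_zero[OF w] signed_perms_in_iff[OF w, of "int i"]
    by (auto simp: signed_negate_def mem_signed_support)
  have "i \<in> descB n (signed_negate n \<circ> w) \<longleftrightarrow> i \<in> {0..<n} - descB n w" for i
  proof (cases "i < n")
    case True
    have "w (int i) \<noteq> w (int i + 1)"
      using signed_perms_eq_iff[OF w] by simp
    moreover have "signed_negate n (w (int i + 1)) = - w (int i + 1)"
      using neg[of "Suc i"] True by (simp add: add.commute)
    ultimately show ?thesis
      using neg[of i] True by (auto simp: descB_def)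
  qed (simp add: descB_def)
  then show ?thesis by blast
qed

lemma ribbon_desc_compl:
  assumes "S \<subseteq> {0..<n}"
  shows "ribbon_desc n ({0..<n} - S) = ribbon_desc n S"
proof -
  have neg: "signed_negate n \<circ> w \<in> signed_perms n" if "w \<in> signed_perms n" for w
    using that signed_negate_permutes signed_negate_odd by (rule signed_perms_compose)
  have "bij_betw ((\<circ>) (signed_negate n)) {w \<in> signed_perms n. descB n w = S}
      {w \<in> signed_perms n. descB n w = {0..<n} - S}"
    by (rule bij_betw_byWitness[where f' = "(\<circ>) (signed_negate n)"])
      (use assms neg descB_signed_negate in \<open>auto simp: fun_eq_iff\<close>)
  then show ?thesis unfolding ribbon_desc_def by (simp add: bij_betw_same_card)
qed

definition signed_swap :: "int \<Rightarrow> int \<Rightarrow> int \<Rightarrow> int" where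
  "signed_swap a b = transpose a b \<circ> transpose (- a) (- b)"

lemma signed_swap_apply:
  assumes "1 \<le> a" "1 \<le> b"
  shows "signed_swap a b x =
    (if x = a then b else if x = b then a else if x = - a then - b else if x = - b then - a else x)"
  using assms by (auto simp: signed_swap_def transpose_def)

lemma signed_swap_odd: "1 \<le> a \<Longrightarrow> 1 \<le> b \<Longrightarrow> signed_swap a b (- x) = - signed_swap a b x"
  by (simp add: signed_swap_apply)

lemma signed_swap_signed_swap: "1 \<le> a \<Longrightarrow> 1 \<le> b \<Longrightarrow> signed_swap a b (signed_swap a b x) = x"
  by (simp add: signed_swap_apply)

lemma signed_swap_commute: "signed_swap a b = signed_swap b a"
  by (simp add: signed_swap_def transpose_commute)

lemma abs_signed_swap: "1 \<le> a \<Longrightarrow> 1 \<le> b \<Longrightarrow> \<bar>signed_swap a b x\<bar> = transpose a b \<bar>x\<bar>"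
  by (auto simp: signed_swap_apply transpose_def abs_if)

lemma signed_swap_permutes:
  assumes "1 \<le> a" "a \<le> int n" "1 \<le> b" "b \<le> int n"
  shows "signed_swap a b permutes signed_support n"
  unfolding signed_swap_def using assms
  by (intro permutes_compose permutes_swap_id) (auto simp: mem_signed_support)

lemma signed_swap_less_iff:
  assumes "1 \<le> a" "1 \<le> b" "\<bar>a - b\<bar> = 1" "\<bar>x\<bar> \<noteq> b" "\<bar>y\<bar> \<noteq> b"
  shows "signed_swap a b x < signed_swap a b y \<longleftrightarrow> x < y"
  using assms unfolding signed_swap_apply[OF assms(1,2)] by (auto simp: abs_if split: if_splits)

definition desc_off_perms :: "nat \<Rightarrow> nat \<Rightarrow> nat set \<Rightarrow> (int \<Rightarrow> int) set" where
  "desc_off_perms n s D = {w \<in> signed_perms n. descB n w - {s} = D}"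

definition prefix_abs_perms :: "nat \<Rightarrow> nat \<Rightarrow> nat set \<Rightarrow> int set \<Rightarrow> (int \<Rightarrow> int) set" where
  "prefix_abs_perms n s D A = {w \<in> desc_off_perms n s D. (\<lambda>i. \<bar>w i\<bar>) ` {1..int s} = A}"

lemma finite_prefix_abs_perms: "finite (prefix_abs_perms n s D A)"
  by (rule finite_subset[OF _ finite_signed_perms])
    (auto simp: prefix_abs_perms_def desc_off_perms_def)

text \<open>Positions \<open>\<le> s\<close> carry absolute values in \<open>A \<union> {0}\<close>, positions \<open>> s\<close> the others, so
  every comparison not at \<open>s\<close> avoids \<open>b\<close> or \<open>a\<close> on both sides and \<open>signed_swap\<close> keeps it.\<close>
lemma signed_swap_mem_prefix_abs_perms:
  assumes "s \<le> n" and ab: "1 \<le> a" "a \<le> int n" "1 \<le> b" "b \<le> int n" "\<bar>a - b\<bar> = 1"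
    and "a \<in> A" "b \<notin> A" and w: "w \<in> prefix_abs_perms n s D A"
  shows "signed_swap a b \<circ> w \<in> prefix_abs_perms n s D (insert b (A - {a}))"
proof -
  have wsp: "w \<in> signed_perms n" and wD: "descB n w - {s} = D"
    and wA: "(\<lambda>i. \<bar>w i\<bar>) ` {1..int s} = A"
    using w by (auto simp: prefix_abs_perms_def desc_off_perms_def)
  have low: "\<bar>w (int j)\<bar> \<noteq> b" if "j \<le> s" for j
  proof (cases "j = 0")
    case True
    then show ?thesis using signed_perms_zero[OF wsp] ab by simp
  next
    case False
    then have "\<bar>w (int j)\<bar> \<in> A" using wA that by force
    then show ?thesis using \<open>b \<notin> A\<close> by auto
  qed
  have high: "\<bar>w (int j)\<bar> \<noteq> a" if "s < j" for j
  proof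
    assume "\<bar>w (int j)\<bar> = a"
    then obtain i where "i \<in> {1..int s}" "\<bar>w (int j)\<bar> = \<bar>w i\<bar>" using wA \<open>a \<in> A\<close> by auto
    then show False using signed_perms_abs_inj[OF wsp, of "int j" i] that by auto
  qed
  have "signed_swap a b (w (int i)) > signed_swap a b (w (int i + 1)) \<longleftrightarrow> w (int i) > w (int i + 1)"
    if "i \<noteq> s" for i
  proof (cases "i < s")
    case True
    then show ?thesis
      using signed_swap_less_iff[OF ab(1,3,5)] low[of i] low[of "i + 1"] by (simp add: add.commute)
  next
    case False
    then show ?thesis
      using signed_swap_less_iff[of b a] ab signed_swap_commute[of a b] high[of i] high[of "i + 1"] that
      by (simp add: add.commute abs_minus_commute)
  qed
  then have "descB n (signed_swap a b \<circ> w) - {s} = D"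
    using wD by (auto simp: descB_def)
  moreover have "(\<lambda>i. \<bar>(signed_swap a b \<circ> w) i\<bar>) ` {1..int s} = transpose a b ` A"
    using wA abs_signed_swap[OF ab(1,3)] by (auto simp: image_comp o_def)
  moreover have "transpose a b ` A = insert b (A - {a})"
    using \<open>a \<in> A\<close> \<open>b \<notin> A\<close> by (auto simp: transpose_def image_iff)
  moreover have "signed_swap a b \<circ> w \<in> signed_perms n"
    using wsp signed_swap_permutes[OF ab(1-4)] signed_swap_odd[OF ab(1,3)] by (rule signed_perms_compose)
  ultimately show ?thesis by (simp add: prefix_abs_perms_def desc_off_perms_def)
qed

lemma card_prefix_abs_perms_swap:
  assumes "s \<le> n" and ab: "1 \<le> a" "a \<le> int n" "1 \<le> b" "b \<le> int n" "\<bar>a - b\<bar> = 1"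
    and "a \<in> A" "b \<notin> A"
  shows "card (prefix_abs_perms n s D (insert b (A - {a}))) = card (prefix_abs_perms n s D A)"
proof -
  have "insert a (insert b (A - {a}) - {b}) = A" using \<open>a \<in> A\<close> \<open>b \<notin> A\<close> by auto
  then have swap_back: "signed_swap a b \<circ> w \<in> prefix_abs_perms n s D A"
    if "w \<in> prefix_abs_perms n s D (insert b (A - {a}))" for w
    using signed_swap_mem_prefix_abs_perms[OF \<open>s \<le> n\<close> ab(3,4,1,2), of "insert b (A - {a})" w D] ab(5) that
      signed_swap_commute[of a b] by (auto simp: abs_minus_commute)
  have "bij_betw ((\<circ>) (signed_swap a b)) (prefix_abs_perms n s D A) (prefix_abs_perms n s D (insert b (A - {a})))"
    by (rule bij_betw_byWitness[where f' = "(\<circ>) (signed_swap a b)"])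
      (use signed_swap_mem_prefix_abs_perms[OF assms] swap_back signed_swap_signed_swap[OF ab(1,3)]
        in \<open>auto simp: fun_eq_iff\<close>)
  then show ?thesis by (simp add: bij_betw_same_card)
qed

lemma pred_closed_eq_atLeastAtMost:
  fixes A :: "int set"
  assumes "finite A" and "\<forall>a\<in>A. 1 \<le> a" and "\<forall>a\<in>A. 2 \<le> a \<longrightarrow> a - 1 \<in> A"
  shows "A = {1..int (card A)}"
proof (cases "A = {}")
  case False
  define m where "m = Max A"
  have "m \<in> A" using assms(1) False by (simp add: m_def)
  have down: "m - int k \<in> A" if "1 \<le> m - int k" for k
    using that
  proof (induction k)
    case (Suc k)
    then have "m - int k \<in> A" "2 \<le> m - int k" by simp_all
    then have "m - int k - 1 \<in> A" using assms(3) by blast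
    then show ?case by (simp add: algebra_simps)
  qed (simp add: \<open>m \<in> A\<close>)
  have "A = {1..m}"
  proof
    show "A \<subseteq> {1..m}" using assms(1,2) by (auto simp: m_def)
    show "{1..m} \<subseteq> A"
    proof
      fix j assume "j \<in> {1..m}"
      then show "j \<in> A" using down[of "nat (m - j)"] by simp
    qed
  qed
  then show ?thesis by simp
qed simp

text \<open>Adjacent swaps push every \<open>s\<close>-subset of \<open>{1..n}\<close> down to \<open>{1..s}\<close>, each step
  lowering \<open>\<Sum>A\<close>.\<close>
lemma card_prefix_abs_perms_eq:
  assumes "s \<le> n" and "A \<subseteq> {1..int n}" and "card A = s"
  shows "card (prefix_abs_perms n s D A) = card (prefix_abs_perms n s D {1..int s})"
  using assms(2,3)
proof (induction "nat (\<Sum>A)" arbitrary: A rule: less_induct)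
  case less
  have fin: "finite A" using less.prems(1) finite_subset by blast
  show ?case
  proof (cases "\<exists>a\<in>A. 2 \<le> a \<and> a - 1 \<notin> A")
    case True
    then obtain a where a: "a \<in> A" "2 \<le> a" "a - 1 \<notin> A" by blast
    define A' where "A' = insert (a - 1) (A - {a})"
    have "card (prefix_abs_perms n s D A') = card (prefix_abs_perms n s D A)"
      unfolding A'_def by (rule card_prefix_abs_perms_swap) (use assms(1) a less.prems(1) in auto)
    moreover have "A' \<subseteq> {1..int n}" using less.prems(1) a by (auto simp: A'_def)
    moreover have "card A' = s"
      using fin a less.prems(2) card_gt_0_iff[of A] by (auto simp: A'_def card_insert_if)
    moreover have "nat (\<Sum>A') < nat (\<Sum>A)"
    proof -
      have "\<Sum>A' = \<Sum>A - 1" using fin a by (simp add: A'_def sum_diff1)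
      moreover have "0 \<le> \<Sum>(A - {a})" using less.prems(1) by (intro sum_nonneg) auto
      then have "a \<le> \<Sum>A" using fin a sum.remove[OF fin a(1), of id] by simp
      ultimately show ?thesis using a by simp
    qed
    ultimately show ?thesis using less.hyps by metis
  next
    case False
    then have "A = {1..int (card A)}"
      using fin less.prems(1) by (intro pred_closed_eq_atLeastAtMost) auto
    then show ?thesis using less.prems(2) by simp
  qed
qed

lemma card_desc_off_perms:
  assumes "s \<le> n"
  shows "card (desc_off_perms n s D) = (n choose s) * card (prefix_abs_perms n s D {1..int s})"
proof -
  define Subs where "Subs = {A. A \<subseteq> {1..int n} \<and> card A = s}"
  have union: "desc_off_perms n s D = (\<Union>A\<in>Subs. prefix_abs_perms n s D A)"
  proof (intro equalityI subsetI)
    fix w assume w: "w \<in> desc_off_perms n s D"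
    then have wsp: "w \<in> signed_perms n" by (simp add: desc_off_perms_def)
    have "(\<lambda>i. \<bar>w i\<bar>) ` {1..int s} \<subseteq> {1..int n}"
      using signed_perms_abs_bounds[OF wsp] assms by force
    moreover have "inj_on (\<lambda>i. \<bar>w i\<bar>) {1..int s}"
      by (rule inj_onI) (use signed_perms_abs_inj[OF wsp] in auto)
    ultimately have "(\<lambda>i. \<bar>w i\<bar>) ` {1..int s} \<in> Subs" by (simp add: Subs_def card_image)
    then show "w \<in> (\<Union>A\<in>Subs. prefix_abs_perms n s D A)"
      using w by (auto simp: prefix_abs_perms_def)
  qed (auto simp: prefix_abs_perms_def)
  have "finite Subs" unfolding Subs_def
    by (rule finite_subset[of _ "Pow {1..int n}"]) auto
  then have "card (desc_off_perms n s D) = (\<Sum>A\<in>Subs. card (prefix_abs_perms n s D A))"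
    unfolding union
    by (rule card_UN_disjoint) (use finite_prefix_abs_perms in \<open>auto simp: prefix_abs_perms_def\<close>)
  also have "\<dots> = (\<Sum>A\<in>Subs. card (prefix_abs_perms n s D {1..int s}))"
    by (rule sum.cong) (use card_prefix_abs_perms_eq[OF assms] in \<open>auto simp: Subs_def\<close>)
  also have "card Subs = n choose s"
    unfolding Subs_def using n_subsets[of "{1..int n}" s] by simp
  ultimately show ?thesis by simp
qed

lemma choose_dvd_ribbon_desc_add_insert:
  assumes "s \<le> n" and "s \<notin> D"
  shows "(n choose s) dvd ribbon_desc n D + ribbon_desc n (insert s D)"
proof -
  have union: "desc_off_perms n s D
      = {w \<in> signed_perms n. descB n w = D} \<union> {w \<in> signed_perms n. descB n w = insert s D}"
    using assms(2) by (auto simp: desc_off_perms_def)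
  have "card (desc_off_perms n s D) = ribbon_desc n D + ribbon_desc n (insert s D)"
    unfolding union ribbon_desc_def
    by (rule card_Un_disjoint) (use assms(2) finite_signed_perms in auto)
  then show ?thesis using card_desc_off_perms[OF assms(1)] by (metis dvd_triv_left)
qed

section \<open>Pseudo-compositions\<close>

lemma desc_comp_singleton [simp]: "desc_comp [a] = {}"
  by (simp add: desc_comp_def)

lemma desc_comp_Cons:
  assumes "\<beta> \<noteq> []"
  shows "desc_comp (a # \<beta>) = insert a ((+) a ` desc_comp \<beta>)"
proof (intro equalityI subsetI)
  fix x assume "x \<in> desc_comp (a # \<beta>)"
  then obtain j where j: "1 \<le> j" "j < Suc (length \<beta>)" "x = sum_list (take j (a # \<beta>))"
    by (auto simp: desc_comp_def)
  show "x \<in> insert a ((+) a ` desc_comp \<beta>)"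
  proof (cases "j = 1")
    case False
    then obtain j' where "j = Suc j'" "1 \<le> j'" using j by (cases j) auto
    then show ?thesis using j by (auto simp: desc_comp_def)
  qed (use j in simp)
next
  fix x assume "x \<in> insert a ((+) a ` desc_comp \<beta>)"
  then consider "x = a" | j where "1 \<le> j" "j < length \<beta>" "x = a + sum_list (take j \<beta>)"
    by (auto simp: desc_comp_def)
  then show "x \<in> desc_comp (a # \<beta>)"
  proof cases
    case 1
    then have "x = sum_list (take 1 (a # \<beta>))" by simp
    then show ?thesis using assms unfolding desc_comp_def by fastforce
  next
    case 2
    then have "x = sum_list (take (Suc j) (a # \<beta>))" by simp
    then show ?thesis using 2 unfolding desc_comp_def by fastforce
  qed
qed

lemma desc_comp_ge_hd:
  assumes "x \<in> desc_comp \<alpha>"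
  shows "hd \<alpha> \<le> x"
proof -
  obtain j where "1 \<le> j" "j < length \<alpha>" "x = sum_list (take j \<alpha>)"
    using assms by (auto simp: desc_comp_def)
  then show ?thesis by (cases \<alpha>; cases j) auto
qed

lemma pseudo_comps_Cons:
  "a # \<beta> \<in> pseudo_comps n \<longleftrightarrow> (\<forall>x\<in>set \<beta>. 0 < x) \<and> a + sum_list \<beta> = n"
proof -
  have "(\<forall>j. 0 < j \<and> j < length (a # \<beta>) \<longrightarrow> 0 < (a # \<beta>) ! j) \<longleftrightarrow>
      (\<forall>j<length \<beta>. 0 < \<beta> ! j)"
  proof safe
    fix j
    assume "\<forall>j. 0 < j \<and> j < length (a # \<beta>) \<longrightarrow> 0 < (a # \<beta>) ! j" and "j < length \<beta>"
    then show "0 < \<beta> ! j" by (metis Suc_mono length_Cons nth_Cons_Suc zero_less_Suc)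
  next
    fix j assume "\<forall>j<length \<beta>. 0 < \<beta> ! j" "0 < j" "j < length (a # \<beta>)"
    then show "0 < (a # \<beta>) ! j" by (cases j) auto
  qed
  also have "\<dots> \<longleftrightarrow> (\<forall>x\<in>set \<beta>. 0 < x)"
    by (simp add: all_set_conv_all_nth)
  finally show ?thesis by (simp add: pseudo_comps_def)
qed

lemma pseudo_comps_Cons_iff:
  "a # \<beta> \<in> pseudo_comps n \<longleftrightarrow>
    (if \<beta> = [] then a = n else a < n \<and> 0 < hd \<beta> \<and> \<beta> \<in> pseudo_comps (n - a))"
proof (cases \<beta>)
  case (Cons b \<gamma>)
  then show ?thesis by (auto simp: pseudo_comps_Cons)
qed (simp add: pseudo_comps_Cons)

lemma desc_comp_subset:
  "\<alpha> \<in> pseudo_comps n \<Longrightarrow> desc_comp \<alpha> \<subseteq> {0..<n}"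
proof (induction \<alpha> arbitrary: n)
  case (Cons a \<beta>)
  show ?case
  proof (cases "\<beta> = []")
    case False
    then have "a < n" "\<beta> \<in> pseudo_comps (n - a)"
      using Cons.prems by (simp_all add: pseudo_comps_Cons_iff)
    then show ?thesis
      using Cons.IH[of "n - a"] False by (auto simp: desc_comp_Cons)
  qed simp
qed (simp add: pseudo_comps_def)

lemma inj_on_desc_comp: "inj_on desc_comp (pseudo_comps n)"
proof (rule inj_onI)
  fix \<alpha> \<alpha>' assume "\<alpha> \<in> pseudo_comps n" "\<alpha>' \<in> pseudo_comps n" "desc_comp \<alpha> = desc_comp \<alpha>'"
  then show "\<alpha> = \<alpha>'"
  proof (induction \<alpha> arbitrary: \<alpha>' n)
    case (Cons a \<beta>)
    obtain a' \<beta>' where \<alpha>': "\<alpha>' = a' # \<beta>'"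
      using Cons.prems(2) by (cases \<alpha>') (auto simp: pseudo_comps_def)
    show ?case
    proof (cases "\<beta> = []")
      case True
      then have "\<beta>' = []"
        using Cons.prems(3) \<alpha>' desc_comp_Cons[of \<beta>' a'] by auto
      then show ?thesis
        using True Cons.prems(1,2) \<alpha>' by (simp add: pseudo_comps_Cons_iff)
    next
      case False
      then have "\<beta>' \<noteq> []"
        using Cons.prems(3) \<alpha>' desc_comp_Cons[of \<beta> a] by auto
      have \<beta>: "0 < hd \<beta>" "\<beta> \<in> pseudo_comps (n - a)"
        using Cons.prems(1) False by (simp_all add: pseudo_comps_Cons_iff)
      have \<beta>': "0 < hd \<beta>'" "\<beta>' \<in> pseudo_comps (n - a')"
        using Cons.prems(2) \<open>\<beta>' \<noteq> []\<close> \<alpha>' by (simp_all add: pseudo_comps_Cons_iff)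
      have D: "insert a ((+) a ` desc_comp \<beta>) = insert a' ((+) a' ` desc_comp \<beta>')"
        using Cons.prems(3) \<alpha>' False \<open>\<beta>' \<noteq> []\<close> by (simp add: desc_comp_Cons)
      \<comment> \<open>the first part is the least element of the descent set\<close>
      then have "a = a'" by (metis antisym insertCI insertE image_iff le_add1)
      moreover have "a \<notin> (+) a ` desc_comp \<beta>" "a \<notin> (+) a ` desc_comp \<beta>'"
        using desc_comp_ge_hd[of _ \<beta>] desc_comp_ge_hd[of _ \<beta>'] \<beta>(1) \<beta>'(1) by fastforce+
      ultimately have "(+) a ` desc_comp \<beta> = (+) a ` desc_comp \<beta>'"
        using D by (metis insert_ident)
      then have "desc_comp \<beta> = desc_comp \<beta>'" by (simp add: inj_image_eq_iff)
      then show ?thesis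
        using Cons.IH[OF \<beta>(2)] \<beta>'(2) \<alpha>' \<open>a = a'\<close> by simp
    qed
  qed (simp add: pseudo_comps_def)
qed

lemma Cons_mem_pseudo_comps:
  assumes "\<beta> \<in> pseudo_comps (n - a)" and "a < n" and "0 \<notin> desc_comp \<beta>"
  shows "a # \<beta> \<in> pseudo_comps n"
proof (cases "\<beta> = []")
  case False
  have "0 < hd \<beta>"
  proof (cases "tl \<beta> = []")
    case True
    then show ?thesis using assms(1,2) False by (cases \<beta>) (auto simp: pseudo_comps_def)
  next
    case False
    then have "hd \<beta> \<in> desc_comp \<beta>"
      using \<open>\<beta> \<noteq> []\<close> by (cases \<beta>) (auto simp: desc_comp_Cons)
    then show ?thesis using assms(3) by (intro gr0I) auto
  qed
  then show ?thesis
    using False assms(1,2) by (simp add: pseudo_comps_Cons_iff)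
qed (use assms(1) in \<open>simp add: pseudo_comps_def\<close>)

text \<open>The inverse map reads off the first part as the least element of \<open>S\<close> and recurses on
  the shifted remainder.\<close>
lemma desc_comp_surj:
  "S \<subseteq> {0..<n} \<Longrightarrow> \<exists>\<alpha>\<in>pseudo_comps n. desc_comp \<alpha> = S"
proof (induction "card S" arbitrary: S n rule: less_induct)
  case less
  have finS: "finite S" using less.prems finite_subset by blast
  show ?case
  proof (cases "S = {}")
    case True
    then show ?thesis by (intro bexI[of _ "[n]"]) (auto simp: pseudo_comps_def)
  next
    case False
    define a where "a = Min S"
    have "a \<in> S" and amin: "\<forall>x\<in>S. a \<le> x" using finS False by (simp_all add: a_def)
    then have "a < n" using less.prems by auto
    define S' where "S' = (\<lambda>x. x - a) ` (S - {a})"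
    have "card S' \<le> card (S - {a})"
      using finS by (simp add: S'_def card_image_le)
    also have "\<dots> < card S"
      using finS \<open>a \<in> S\<close> by (rule card_Diff1_less)
    finally have "card S' < card S" .
    moreover have "S' \<subseteq> {0..<n - a}" using less.prems amin by (force simp: S'_def)
    ultimately obtain \<beta> where \<beta>: "\<beta> \<in> pseudo_comps (n - a)" "desc_comp \<beta> = S'"
      using less.hyps by blast
    have "0 \<notin> desc_comp \<beta>" using amin \<beta>(2) by (force simp: S'_def)
    with \<beta>(1) \<open>a < n\<close> have "a # \<beta> \<in> pseudo_comps n" by (rule Cons_mem_pseudo_comps)
    moreover have "desc_comp (a # \<beta>) = S"
    proof -
      have "(+) a ` S' = S - {a}"
        using amin by (force simp: S'_def image_image)
      then show ?thesis
        using \<beta> \<open>a \<in> S\<close> \<open>a # \<beta> \<in> pseudo_comps n\<close> by (cases "\<beta> = []") (auto simp: desc_comp_Cons pseudo_comps_def)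
    qed
    ultimately show ?thesis by blast
  qed
qed

lemma bij_betw_desc_comp: "bij_betw desc_comp (pseudo_comps n) (Pow {0..<n})"
proof (rule bij_betw_imageI)
  show "desc_comp ` pseudo_comps n = Pow {0..<n}"
  proof (intro equalityI subsetI)
    fix S assume "S \<in> desc_comp ` pseudo_comps n"
    then show "S \<in> Pow {0..<n}" using desc_comp_subset by auto
  next
    fix S assume "S \<in> Pow {0..<n}"
    then obtain \<alpha> where "\<alpha> \<in> pseudo_comps n" "desc_comp \<alpha> = S"
      using desc_comp_surj[of S n] by auto
    then show "S \<in> desc_comp ` pseudo_comps n" by blast
  qed
qed (rule inj_on_desc_comp)

section \<open>Ribbon numbers modulo \<open>p\<close>\<close>

definition choose_dvd_positions :: "nat \<Rightarrow> nat \<Rightarrow> nat set" where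
  "choose_dvd_positions p n = {s. 0 < s \<and> s < n \<and> p dvd (n choose s)}"

lemma finite_choose_dvd_positions: "finite (choose_dvd_positions p n)"
proof (rule finite_subset)
  show "choose_dvd_positions p n \<subseteq> {..<n}" by (auto simp: choose_dvd_positions_def)
qed simp

lemma card_choose_dvd_positions:
  assumes p: "prime p" and "n < p ^ (k + 1)"
  shows "card (choose_dvd_positions p n) + (\<Prod>j\<le>k. digit p n j + 1) = n + 1"
proof -
  have "\<not> p dvd 1" using prime_gt_1_nat[OF p] by simp
  have eq: "{..n} = choose_dvd_positions p n \<union> {s. \<not> p dvd (n choose s)}"
  proof (intro equalityI subsetI)
    fix s assume "s \<in> {..n}"
    then show "s \<in> choose_dvd_positions p n \<union> {s. \<not> p dvd (n choose s)}"
      using \<open>\<not> p dvd 1\<close> by (cases "s = 0 \<or> s = n") (auto simp: choose_dvd_positions_def)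
  next
    fix s assume "s \<in> choose_dvd_positions p n \<union> {s. \<not> p dvd (n choose s)}"
    then show "s \<in> {..n}"
      by (cases "s \<le> n") (auto simp: choose_dvd_positions_def binomial_eq_0)
  qed
  have "n + 1 = card (choose_dvd_positions p n \<union> {s. \<not> p dvd (n choose s)})"
    unfolding eq[symmetric] by simp
  also have "\<dots> = card (choose_dvd_positions p n) + card {s. \<not> p dvd (n choose s)}"
    by (rule card_Un_disjoint[OF finite_choose_dvd_positions finite_not_dvd_choose])
      (auto simp: choose_dvd_positions_def)
  also have "card {s. \<not> p dvd (n choose s)} = (\<Prod>j\<le>k. digit p n j + 1)"
    by (rule card_not_dvd_choose_eq_prod_digits[OF assms])
  finally show ?thesis by (rule sym)
qed

lemma choose_dvd_positions_empty_iff: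
  assumes p: "prime p" and "p ^ k \<le> n" and "n < p ^ (k + 1)"
  shows "choose_dvd_positions p n = {} \<longleftrightarrow> (\<forall>j<k. digit p n j = p - 1)"
proof -
  have "choose_dvd_positions p n = {} \<longleftrightarrow> card (choose_dvd_positions p n) = 0"
    by (simp add: finite_choose_dvd_positions)
  also have "\<dots> \<longleftrightarrow> (\<Prod>j\<le>k. digit p n j + 1) = n + 1"
    using card_choose_dvd_positions[OF p assms(3)] by (intro iffI) linarith+
  also have "\<dots> \<longleftrightarrow> (\<forall>j<k. digit p n j = p - 1)"
    by (rule prod_digits_eq_Suc_iff[OF prime_gt_1_nat[OF p] assms(2,3)])
  finally show ?thesis .
qed

lemma ribbon_desc_toggle_cong:
  assumes "s \<in> choose_dvd_positions p n"
  shows "[int (ribbon_desc n (toggle s S)) = - int (ribbon_desc n S)] (mod int p)"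
proof -
  have "s \<le> n" and "p dvd (n choose s)"
    using assms by (simp_all add: choose_dvd_positions_def)
  then have "p dvd ribbon_desc n (S - {s}) + ribbon_desc n (insert s (S - {s}))"
    using choose_dvd_ribbon_desc_add_insert[of s n "S - {s}"] by (auto intro: dvd_trans)
  then have "p dvd ribbon_desc n (toggle s S) + ribbon_desc n S"
    by (cases "s \<in> S") (simp_all add: toggle_def insert_absorb add.commute)
  then have "int p dvd int (ribbon_desc n (toggle s S)) + int (ribbon_desc n S)"
    by (simp only: of_nat_add[symmetric] int_dvd_int_iff)
  then show ?thesis by (simp add: cong_iff_dvd_diff)
qed

definition desc_sets_cong :: "nat \<Rightarrow> nat \<Rightarrow> int \<Rightarrow> nat set set" where
  "desc_sets_cong p n i = {S \<in> Pow {0..<n}. [int (ribbon_desc n S) = i] (mod int p)}"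

lemma cB_eq_card_desc_sets_cong: "cB p i n = card (desc_sets_cong p n i)"
proof -
  have "bij_betw desc_comp {\<alpha> \<in> pseudo_comps n. [int (ribbonB n \<alpha>) = i] (mod int p)} (desc_sets_cong p n i)"
    unfolding desc_sets_cong_def
    by (rule bij_betw_Collect[OF bij_betw_desc_comp]) (simp add: ribbonB_eq_ribbon_desc)
  then show ?thesis by (simp add: cB_def bij_betw_same_card)
qed

lemma toggle_mem_desc_sets_cong:
  assumes "s \<in> choose_dvd_positions p n" and "S \<in> desc_sets_cong p n i"
  shows "toggle s S \<in> desc_sets_cong p n (- i)"
proof -
  have "s < n" using assms(1) by (simp add: choose_dvd_positions_def)
  then have "toggle s S \<subseteq> {0..<n}" using assms(2) by (auto simp: toggle_def desc_sets_cong_def)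
  moreover have "[- int (ribbon_desc n S) = - i] (mod int p)"
    using assms(2) by (simp add: desc_sets_cong_def cong_minus_minus_iff)
  then have "[int (ribbon_desc n (toggle s S)) = - i] (mod int p)"
    using ribbon_desc_toggle_cong[OF assms(1), of S] by (rule cong_trans[rotated])
  ultimately show ?thesis by (simp add: desc_sets_cong_def)
qed

lemma compl_mem_desc_sets_cong:
  "S \<in> desc_sets_cong p n i \<Longrightarrow> {0..<n} - S \<in> desc_sets_cong p n i"
  by (simp add: desc_sets_cong_def ribbon_desc_compl)

lemma desc_sets_cong_uminus:
  assumes "[i = 0] (mod int p)"
  shows "desc_sets_cong p n (- i) = desc_sets_cong p n i"
proof -
  have "[- i = 0] (mod int p)" using assms by (simp add: cong_0_iff)
  then have neg: "[- i = i] (mod int p)" using cong_sym[OF assms] by (rule cong_trans)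
  have "[r = - i] (mod int p) \<longleftrightarrow> [r = i] (mod int p)" for r
  proof
    assume "[r = - i] (mod int p)"
    then show "[r = i] (mod int p)" using neg by (rule cong_trans)
  next
    assume "[r = i] (mod int p)"
    then show "[r = - i] (mod int p)" using cong_sym[OF neg] by (rule cong_trans)
  qed
  then show ?thesis by (simp add: desc_sets_cong_def)
qed

lemma cB_uminus:
  assumes "choose_dvd_positions p n \<noteq> {}"
  shows "cB p (- i) n = cB p i n"
proof -
  obtain s where s: "s \<in> choose_dvd_positions p n" using assms by blast
  have "bij_betw (toggle s) (desc_sets_cong p n i) (desc_sets_cong p n (- i))"
    by (rule bij_betw_byWitness[where f' = "toggle s"])
      (use toggle_mem_desc_sets_cong[OF s, of _ i] toggle_mem_desc_sets_cong[OF s, of _ "- i"] in auto)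
  then show ?thesis by (simp add: cB_eq_card_desc_sets_cong bij_betw_same_card)
qed

lemma desc_sets_cong_subset: "desc_sets_cong p n i \<subseteq> Pow {0..<n}"
  by (auto simp: desc_sets_cong_def)

lemma choose_dvd_positions_subset: "choose_dvd_positions p n \<subseteq> {0..<n}"
  by (auto simp: choose_dvd_positions_def)

lemma zero_notin_choose_dvd_positions: "0 \<notin> choose_dvd_positions p n"
  by (simp add: choose_dvd_positions_def)

lemma two_power_Suc_dvd_cB:
  assumes "0 < n" and "[i = 0] (mod int p) \<or> choose_dvd_positions p n = {}"
  shows "2 ^ Suc (card (choose_dvd_positions p n)) dvd cB p i n"
  unfolding cB_eq_card_desc_sets_cong
proof (rule two_power_Suc_card_dvd_card_if_toggle_compl_closed[where W = "{0..<n}" and z = 0])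
  show "toggle s S \<in> desc_sets_cong p n i"
    if "S \<in> desc_sets_cong p n i" and s: "s \<in> choose_dvd_positions p n" for S s
  proof -
    have "[i = 0] (mod int p)" using assms(2) s by blast
    then have eq: "desc_sets_cong p n (- i) = desc_sets_cong p n i" by (rule desc_sets_cong_uminus)
    show ?thesis
      using toggle_mem_desc_sets_cong[OF s that(1)] unfolding eq .
  qed
  show "{0..<n} - S \<in> desc_sets_cong p n i" if "S \<in> desc_sets_cong p n i" for S
    using that by (rule compl_mem_desc_sets_cong)
qed (use assms(1) choose_dvd_positions_subset zero_notin_choose_dvd_positions desc_sets_cong_subset in auto)

lemma cong_uminus_self_imp_cong_0:
  assumes "prime p" and "odd p" and "[i = - i] (mod int p)"
  shows "[i = 0] (mod int p)"
proof -
  have "int p dvd 2 * i" using assms(3) by (simp add: cong_iff_dvd_diff)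
  moreover have "\<not> p dvd 2"
  proof
    assume "p dvd 2"
    then have "p \<le> 2" by (simp add: dvd_imp_le)
    then show False using prime_ge_2_nat[OF assms(1)] assms(2) by (simp add: le_antisym)
  qed
  then have "\<not> int p dvd 2" by (metis int_dvd_int_iff of_nat_numeral)
  ultimately have "int p dvd i" using assms(1) by (simp add: prime_dvd_mult_iff)
  then show ?thesis by (simp add: cong_0_iff)
qed

lemma two_power_dvd_cB:
  assumes "prime p" and "odd p" and "0 < n"
  shows "2 ^ card (choose_dvd_positions p n) dvd cB p i n"
proof (cases "[i = 0] (mod int p) \<or> choose_dvd_positions p n = {}")
  case True
  have "2 ^ card (choose_dvd_positions p n) dvd (2::nat) ^ Suc (card (choose_dvd_positions p n))"
    by (simp add: le_imp_power_dvd)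
  then show ?thesis using two_power_Suc_dvd_cB[OF assms(3) True] by (rule dvd_trans)
next
  case False
  let ?P = "desc_sets_cong p n i \<union> desc_sets_cong p n (- i)"
  have "[i = - i] (mod int p)" if "S \<in> desc_sets_cong p n i" "S \<in> desc_sets_cong p n (- i)" for S
  proof -
    have "[int (ribbon_desc n S) = i] (mod int p)" "[int (ribbon_desc n S) = - i] (mod int p)"
      using that by (simp_all add: desc_sets_cong_def)
    then show ?thesis by (metis cong_sym cong_trans)
  qed
  then have "desc_sets_cong p n i \<inter> desc_sets_cong p n (- i) = {}"
    using False cong_uminus_self_imp_cong_0[OF assms(1,2)] by blast
  then have "card ?P = cB p i n + cB p (- i) n"
    unfolding cB_eq_card_desc_sets_cong by (rule card_Un_disjoint[rotated 2]) (simp_all add: desc_sets_cong_def)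
  also have "\<dots> = 2 * cB p i n" using cB_uminus[of p n i] False by simp
  finally have "card ?P = 2 * cB p i n" .
  moreover have "2 ^ Suc (card (choose_dvd_positions p n)) dvd card ?P"
  proof (rule two_power_Suc_card_dvd_card_if_toggle_compl_closed[where W = "{0..<n}" and z = 0])
    show "toggle s S \<in> ?P" if "S \<in> ?P" and "s \<in> choose_dvd_positions p n" for S s
      using that toggle_mem_desc_sets_cong[OF that(2), of S] toggle_mem_desc_sets_cong[OF that(2), of S "- i"]
      by auto
    show "{0..<n} - S \<in> ?P" if "S \<in> ?P" for S
      using that compl_mem_desc_sets_cong by blast
  qed (use assms(3) choose_dvd_positions_subset zero_notin_choose_dvd_positions desc_sets_cong_subset in auto)
  ultimately show ?thesis by simp
qed

theorem corollary4p4: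
  fixes p n k :: nat
  assumes "prime p" and "odd p" and "n \<ge> 2"
    and "p ^ k \<le> n" and "n < p ^ (k + 1)"
  shows "(\<not> (\<forall>j<k. digit p n j = p - 1) \<longrightarrow> (\<forall>i::int. cB p i n = cB p (- i) n))
    \<and> (\<forall>i::int.
         (([i = 0] (mod int p) \<or> (\<forall>j<k. digit p n j = p - 1)) \<longrightarrow>
            2 ^ (n + 2 - (\<Prod>j\<le>k. digit p n j + 1)) dvd cB p i n)
       \<and> (\<not> ([i = 0] (mod int p) \<or> (\<forall>j<k. digit p n j = p - 1)) \<longrightarrow>
            2 ^ (n + 1 - (\<Prod>j\<le>k. digit p n j + 1)) dvd cB p i n))"
proof -
  let ?F = "choose_dvd_positions p n"
  have "0 < n" using assms(3) by simp
  have "card ?F + (\<Prod>j\<le>k. digit p n j + 1) = n + 1"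
    by (rule card_choose_dvd_positions[OF assms(1,5)])
  then have exponents: "n + 2 - (\<Prod>j\<le>k. digit p n j + 1) = Suc (card ?F)"
    "n + 1 - (\<Prod>j\<le>k. digit p n j + 1) = card ?F"
    by linarith+
  have empty_iff: "?F = {} \<longleftrightarrow> (\<forall>j<k. digit p n j = p - 1)"
    by (rule choose_dvd_positions_empty_iff[OF assms(1,4,5)])
  show ?thesis
    unfolding exponents
  proof (intro conjI allI impI)
    fix i :: int
    assume "\<not> (\<forall>j<k. digit p n j = p - 1)"
    then have "?F \<noteq> {}" using empty_iff by blast
    then show "cB p i n = cB p (- i) n" by (rule cB_uminus[symmetric])
  next
    fix i :: int
    assume "[i = 0] (mod int p) \<or> (\<forall>j<k. digit p n j = p - 1)"
    then have "[i = 0] (mod int p) \<or> ?F = {}" using empty_iff by blast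
    then show "2 ^ Suc (card ?F) dvd cB p i n" by (rule two_power_Suc_dvd_cB[OF \<open>0 < n\<close>])
  next
    fix i :: int
    show "2 ^ card ?F dvd cB p i n" by (rule two_power_dvd_cB[OF assms(1,2) \<open>0 < n\<close>])
  qed
qed

end
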